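(* Let $\alpha\in[0,1]$ and let $\mathbf{d}'$ be a delay function that is $\alpha$-bounded by a delay function $\mathbf{d}$. If $\alpha\le\frac{1}{2\cdot\mathrm{CB}(\#,\mathbf{d})\cdot|S'|}$, then $$E_{\mathcal{M}(\mathbf{d}')}\le E_{\mathcal{M}(\mathbf{d})}+2\cdot\alpha\cdot\mathrm{CB}(\#,\mathbf{d})\cdot\big(1+\mathrm{CB}(c,\mathbf{d})\cdot|S'|\big).$$
   Context: $C=(S,\lambda,\mathrm{P},S_{fd},\mathrm{F},s_{in})$ is a fdCTMC structure ($S$ finite, $\lambda>0$, $\mathrm{P}\in\mathbb{R}_{\ge0}^{S\times S}$, $\mathrm{F}\in\mathbb{R}_{\ge0}^{S_{fd}\times S}$ stochastic) with a cost structure $(G,\mathcal{R},\mathcal{I}_{\mathrm{P}},\mathcal{I}_{\mathrm{F}})$, $\mathcal{R}(s)>0$ for all $s$. For a delay function $\mathbf{d}:S_{fd}\to\mathbb{R}_{>0}$, $C(\mathbf{d})$ evolves from $(s_i,d_i)$ ($d_0=\mathbf{d}(s_{in})$ or $\infty$) by sampling an $\mathrm{Exp}(\lambda)$ time $t_i$; if $t_i<d_i$, $s_{i+1}\sim\mathrm{P}(s_i,\cdot)$, $d_{i+1}=d_i-t_i$ if $s_i,s_{i+1}\in S_{fd}$, $\mathbf{d}(s_{i+1})$ if $s_{i+1}\in S_{fd}\not\ni s_i$, $\infty$ if $s_{i+1}\notin S_{fd}$; otherwise $t_i=d_i$, $s_{i+1}\sim\mathrm{F}(s_i,\cdot)$,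 $d_{i+1}=\mathbf{d}(s_{i+1})$ or $\infty$. The cost of a run is $\sum_{i<n}(t_i\mathcal{R}(s_i)+I_i)$ up to the first $n>0$ with $s_n\in G$ ($I_i$ the $\mathcal{I}_{\mathrm{P}}$/$\mathcal{I}_{\mathrm{F}}$ impulse of the transition; $\infty$ if $G$ is never reached). Standing assumption: $S_{fd}=S^{reset}\uplus S^{keep}$ where $S^{reset}$ are the states entered by exp-delay transitions from $S\setminus S_{fd}$ or by fixed-delay transitions and $S^{keep}$ those entered by exp-delay transitions from $S_{fd}$; $s_{in}\in S^{reset}$ if $s_{in}\in S_{fd}$. $S'=S^{reset}\cup(S\setminus S_{fd})\cup G$. DTMDP $\mathcal{M}$: vertices $S'$, goal vertices $G$, actions $\mathbb{R}_{>0}$ enabled in $S^{reset}$ and $\infty$ enabled in $S\setminus S_{fd}$; for action $d$ in $s$, $T(s,d)(s')$ is the probability, in $C$ started in $s$ with delay $d$ set in $s$, that the first $S'$-state visited after at least one transition is $s'$, and $c(s,d)$ is the expected cost accumulated until then. Delay functions are memoryless strategies of $\mathcal{M}$; $\mathcal{M}[s]$ is $\mathcal{M}$ started in $s$; for a one-step cost function $\$$ on actions, $E^{\$}_{\mathcal{M}[s](\mathbf{d})}$ is the expected accumulated $\$$ before reaching $G$; $E_{\mathcal{M}(\mathbf{d})}=E^{c}_{\mathcal{M}[s_{in}](\mathbf{d})}$; $\mathrm{CB}(\$,\mathbf{d})=\max_{s\in S'}E^{\$}_{\mathcal{M}[s](\mathbf{d})}$; $\#$ assigns $1$ to every action. A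 delay function $\mathbf{d}^\star$ is $\alpha$-bounded by $\mathbf{d}$ if for all $s,t\in S'$: $|T(s,\mathbf{d}^\star(s))(t)-T(s,\mathbf{d}(s))(t)|\le\alpha$, $c(s,\mathbf{d}^\star(s))-c(s,\mathbf{d}(s))\le\alpha$, and $T(s,\mathbf{d}(s))(t)=0$ iff $T(s,\mathbf{d}^\star(s))(t)=0$. *)

theory Defs
  imports "HOL-Analysis.Analysis"
begin

text \<open>A DTMDP (as produced from the fdCTMC): finite vertex set V (= S'), goal
vertices G, enabled actions A s, transition probabilities T s a t and one-step
costs c s a. Only the properties of the DTMDP M that the lemma refers to are
assumed.\<close>

definition dtmdp ::
  "'v set \<Rightarrow> 'v set \<Rightarrow> ('v \<Rightarrow> 'a set) \<Rightarrow> ('v \<Rightarrow> 'a \<Rightarrow> 'v \<Rightarrow> real) \<Rightarrow> ('v \<Rightarrow> 'a \<Rightarrow> real) \<Rightarrow> bool" where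
  "dtmdp V G A T c \<longleftrightarrow> finite V \<and> G \<subseteq> V \<and>
     (\<forall>s\<in>V - G. \<forall>a\<in>A s. (\<forall>t. 0 \<le> T s a t) \<and> (\<forall>t. t \<notin> V \<longrightarrow> T s a t = 0) \<and>
        (\<Sum>t\<in>V. T s a t) = 1 \<and> 0 \<le> c s a)"

text \<open>Memoryless strategy (delay function): picks an enabled action in every non-goal vertex.\<close>
definition strategy :: "'v set \<Rightarrow> 'v set \<Rightarrow> ('v \<Rightarrow> 'a set) \<Rightarrow> ('v \<Rightarrow> 'a) \<Rightarrow> bool" where
  "strategy V G A d \<longleftrightarrow> (\<forall>s\<in>V - G. d s \<in> A s)"

text \<open>reach V G T d n s t: probability, in the Markov chain induced by d started in s,
of being in t after n steps while all of the vertices at steps 0..n-1 are not in G.\<close>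
fun reach :: "'v set \<Rightarrow> 'v set \<Rightarrow> ('v \<Rightarrow> 'a \<Rightarrow> 'v \<Rightarrow> real) \<Rightarrow> ('v \<Rightarrow> 'a) \<Rightarrow> nat \<Rightarrow> 'v \<Rightarrow> 'v \<Rightarrow> real" where
  "reach V G T d 0 s t = (if t = s then 1 else 0)"
| "reach V G T d (Suc n) s t = (\<Sum>u\<in>V - G. reach V G T d n s u * T u (d u) t)"

text \<open>E^cost_{M[s](d)}: expected accumulated one-step cost before reaching G.\<close>
definition expcost :: "'v set \<Rightarrow> 'v set \<Rightarrow> ('v \<Rightarrow> 'a \<Rightarrow> 'v \<Rightarrow> real) \<Rightarrow> ('v \<Rightarrow> 'a) \<Rightarrow> ('v \<Rightarrow> 'a \<Rightarrow> real) \<Rightarrow> 'v \<Rightarrow> ennreal" where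
  "expcost V G T d cost s = (\<Sum>n. \<Sum>t\<in>V - G. ennreal (reach V G T d n s t * cost t (d t)))"

definition CB :: "'v set \<Rightarrow> 'v set \<Rightarrow> ('v \<Rightarrow> 'a \<Rightarrow> 'v \<Rightarrow> real) \<Rightarrow> ('v \<Rightarrow> 'a \<Rightarrow> real) \<Rightarrow> ('v \<Rightarrow> 'a) \<Rightarrow> ennreal" where
  "CB V G T cost d = Max ((\<lambda>s. expcost V G T d cost s) ` V)"

text \<open>The cost function # assigning 1 to every action.\<close>
definition count_cost :: "'v \<Rightarrow> 'a \<Rightarrow> real" where
  "count_cost s a = 1"

definition alpha_bounded ::
  "'v set \<Rightarrow> ('v \<Rightarrow> 'a \<Rightarrow> 'v \<Rightarrow> real) \<Rightarrow> ('v \<Rightarrow> 'a \<Rightarrow> real) \<Rightarrow> real \<Rightarrow> ('v \<Rightarrow> 'a) \<Rightarrow> ('v \<Rightarrow> 'a) \<Rightarrow> bool" where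
  "alpha_bounded V T c \<alpha> d' d \<longleftrightarrow> (\<forall>s\<in>V. \<forall>t\<in>V.
      \<bar>T s (d' s) t - T s (d s) t\<bar> \<le> \<alpha> \<and> c s (d' s) - c s (d s) \<le> \<alpha> \<and>
      (T s (d s) t = 0 \<longleftrightarrow> T s (d' s) t = 0))"

end

theory Submission
  imports Defs
begin

(* The expected accumulated cost E^f(d) satisfies the Bellman equation E = f + T E and is its
   least nonnegative solution, so every nonnegative supersolution h (one with f + T h <= h off
   the goal) bounds it from above. Take e = E^c(d), the expected number of steps
   kappa = E^#(d), and h = e + gamma * kappa with gamma = 2 alpha (1 + |S'| CB(c,d)).
   Replacing d by d' raises the one-step cost by at most alpha and T e by at most
   |S'| alpha CB(c,d), together gamma/2; it raises gamma * T kappa by at most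
   gamma |S'| alpha CB(#,d) <= gamma/2 by the hypothesis on alpha; and the constant 1 in the
   Bellman equation of kappa pays for both. So h is a supersolution for d', whence
   E^c(d') <= e + gamma * CB(#,d). *)

lemma sum_ennreal_mult:
  assumes "\<And>w. w \<in> W \<Longrightarrow> 0 \<le> p w" and "\<And>w. w \<in> W \<Longrightarrow> 0 \<le> x w"
  shows "(\<Sum>w\<in>W. ennreal (p w) * ennreal (x w)) = ennreal (\<Sum>w\<in>W. p w * x w)"
proof -
  have "(\<Sum>w\<in>W. ennreal (p w) * ennreal (x w)) = (\<Sum>w\<in>W. ennreal (p w * x w))"
    using assms by (intro sum.cong) (simp_all add: ennreal_mult)
  also have "\<dots> = ennreal (\<Sum>w\<in>W. p w * x w)"
    using assms by (intro sum_ennreal) simp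
  finally show ?thesis .
qed

lemma ennreal_enn2real_of_le: "x \<le> ennreal B \<Longrightarrow> ennreal (enn2real x) = x"
  by (metis ennreal_enn2real ennreal_less_top le_less_trans)

lemma sum_perturbed_le:
  fixes p p' x :: "'v \<Rightarrow> real" and \<alpha> B :: real
  assumes "\<forall>w\<in>W. \<bar>p' w - p w\<bar> \<le> \<alpha>" and "\<forall>w\<in>W. 0 \<le> x w \<and> x w \<le> B"
  shows "(\<Sum>w\<in>W. p' w * x w) \<le> (\<Sum>w\<in>W. p w * x w) + card W * (\<alpha> * B)"
proof -
  have "(\<Sum>w\<in>W. p' w * x w) - (\<Sum>w\<in>W. p w * x w) = (\<Sum>w\<in>W. (p' w - p w) * x w)"
    by (simp add: sum_subtractf left_diff_distrib)
  also have "\<dots> \<le> (\<Sum>w\<in>W. \<alpha> * B)"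
  proof (rule sum_mono)
    fix w assume "w \<in> W"
    then have "\<bar>p' w - p w\<bar> \<le> \<alpha>" and "0 \<le> x w" and "x w \<le> B"
      using assms by auto
    have "(p' w - p w) * x w \<le> \<bar>p' w - p w\<bar> * x w"
      by (rule mult_right_mono[OF abs_ge_self \<open>0 \<le> x w\<close>])
    also have "\<dots> \<le> \<alpha> * B"
      using \<open>\<bar>p' w - p w\<bar> \<le> \<alpha>\<close> \<open>0 \<le> x w\<close> \<open>x w \<le> B\<close> by (intro mult_mono) auto
    finally show "(p' w - p w) * x w \<le> \<alpha> * B" .
  qed
  finally show ?thesis by simp
qed

lemma perturbed_supersolution_step:
  fixes p p' e \<kappa> :: "'v \<Rightarrow> real" and W :: "'v set" and \<alpha> a a' B K :: real
  defines "\<gamma> \<equiv> 2 * \<alpha> * (1 + card W * B)"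
  assumes dp: "\<forall>w\<in>W. \<bar>p' w - p w\<bar> \<le> \<alpha>" and da: "a' - a \<le> \<alpha>" and "0 \<le> \<alpha>"
    and e: "\<forall>w\<in>W. 0 \<le> e w \<and> e w \<le> B" and \<kappa>: "\<forall>w\<in>W. 0 \<le> \<kappa> w \<and> \<kappa> w \<le> K"
    and small: "\<alpha> * K * card W \<le> 1 / 2" and "0 \<le> B"
  shows "a' + (\<Sum>w\<in>W. p' w * (e w + \<gamma> * \<kappa> w))
    \<le> (a + (\<Sum>w\<in>W. p w * e w)) + \<gamma> * (1 + (\<Sum>w\<in>W. p w * \<kappa> w))"
proof -
  have "0 \<le> \<gamma>"
    unfolding \<gamma>_def using \<open>0 \<le> \<alpha>\<close> \<open>0 \<le> B\<close> by simp
  have split: "(\<Sum>w\<in>W. p' w * (e w + \<gamma> * \<kappa> w)) = (\<Sum>w\<in>W. p' w * e w) + \<gamma> * (\<Sum>w\<in>W. p' w * \<kappa> w)"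
    by (simp add: sum.distrib sum_distrib_left algebra_simps)
  have e_step: "(\<Sum>w\<in>W. p' w * e w) \<le> (\<Sum>w\<in>W. p w * e w) + card W * (\<alpha> * B)"
    by (rule sum_perturbed_le[OF dp e])
  have "\<gamma> * (\<Sum>w\<in>W. p' w * \<kappa> w) \<le> \<gamma> * ((\<Sum>w\<in>W. p w * \<kappa> w) + card W * (\<alpha> * K))"
    by (rule mult_left_mono[OF sum_perturbed_le[OF dp \<kappa>] \<open>0 \<le> \<gamma>\<close>])
  also have "\<dots> \<le> \<gamma> * (\<Sum>w\<in>W. p w * \<kappa> w) + \<gamma> / 2"
    using mult_left_mono[OF small \<open>0 \<le> \<gamma>\<close>] by (simp add: algebra_simps)
  finally have \<kappa>_step: "\<gamma> * (\<Sum>w\<in>W. p' w * \<kappa> w) \<le> \<gamma> * (\<Sum>w\<in>W. p w * \<kappa> w) + \<gamma> / 2" .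
  have "\<alpha> + card W * (\<alpha> * B) = \<gamma> / 2"
    unfolding \<gamma>_def by (simp add: algebra_simps)
  then show ?thesis
    using split e_step \<kappa>_step da by (simp add: algebra_simps)
qed

lemma strategy_T_nonneg:
  "dtmdp V G A T c \<Longrightarrow> strategy V G A d \<Longrightarrow> u \<in> V - G \<Longrightarrow> 0 \<le> T u (d u) t"
  unfolding dtmdp_def strategy_def by blast

lemma strategy_T_eq_0_outside:
  "dtmdp V G A T c \<Longrightarrow> strategy V G A d \<Longrightarrow> u \<in> V - G \<Longrightarrow> t \<notin> V \<Longrightarrow> T u (d u) t = 0"
  unfolding dtmdp_def strategy_def by blast

lemma strategy_cost_nonneg:
  "dtmdp V G A T c \<Longrightarrow> strategy V G A d \<Longrightarrow> u \<in> V - G \<Longrightarrow> 0 \<le> c u (d u)"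
  unfolding dtmdp_def strategy_def by blast

lemma dtmdp_finite: "dtmdp V G A T c \<Longrightarrow> finite V"
  unfolding dtmdp_def by blast

lemma reach_nonneg:
  assumes "dtmdp V G A T c" "strategy V G A d"
  shows "0 \<le> reach V G T d n s t"
  by (induction n arbitrary: t) (auto intro!: sum_nonneg mult_nonneg_nonneg strategy_T_nonneg[OF assms])

lemma reach_Suc_first:
  assumes D: "dtmdp V G A T c" and S: "strategy V G A d"
  shows "reach V G T d (Suc n) s t =
    (if s \<in> V - G then \<Sum>u\<in>V. T s (d s) u * reach V G T d n u t else 0)"
proof (induction n arbitrary: t)
  case 0
  show ?case
  proof (cases "s \<in> V - G")
    case True
    have "(\<Sum>u\<in>V. T s (d s) u * (if t = u then 1 else 0)) = (if t \<in> V then T s (d s) t else 0)"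
      using dtmdp_finite[OF D] by (simp add: if_distrib[of "\<lambda>x. _ * x"] sum.delta cong: if_cong)
    also have "\<dots> = T s (d s) t"
      using strategy_T_eq_0_outside[OF D S True] by auto
    finally show ?thesis
      using True dtmdp_finite[OF D] by (simp add: if_distrib[of "\<lambda>x. x * _"] cong: if_cong)
  next
    case False
    then show ?thesis by (auto intro: sum.neutral)
  qed
next
  case (Suc n)
  show ?case
  proof (cases "s \<in> V - G")
    case True
    have "reach V G T d (Suc (Suc n)) s t
        = (\<Sum>w\<in>V - G. (\<Sum>u\<in>V. T s (d s) u * reach V G T d n u w) * T w (d w) t)"
      using Suc True by simp
    also have "\<dots> = (\<Sum>u\<in>V. T s (d s) u * (\<Sum>w\<in>V - G. reach V G T d n u w * T w (d w) t))"
      by (simp add: sum_distrib_left sum_distrib_right sum.swap[of _ "V - G"] mult.assoc)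
    finally show ?thesis using True by simp
  next
    case False
    then have "reach V G T d (Suc n) s w = 0" for w
      using Suc.IH[of w] by (auto simp del: reach.simps)
    then have "reach V G T d (Suc (Suc n)) s t = 0"
      by (simp del: reach.simps add: reach.simps(2)[of _ _ _ _ "Suc n"])
    then show ?thesis
      using False by (auto simp del: reach.simps)
  qed
qed

definition step_cost ::
  "'v set \<Rightarrow> 'v set \<Rightarrow> ('v \<Rightarrow> 'a \<Rightarrow> 'v \<Rightarrow> real) \<Rightarrow> ('v \<Rightarrow> 'a) \<Rightarrow> ('v \<Rightarrow> 'a \<Rightarrow> real) \<Rightarrow> nat \<Rightarrow> 'v \<Rightarrow> real"
  where "step_cost V G T d f n s = (\<Sum>t\<in>V - G. reach V G T d n s t * f t (d t))"

lemma step_cost_0: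
  assumes "finite V"
  shows "step_cost V G T d f 0 s = (if s \<in> V - G then f s (d s) else 0)"
  using assms by (simp add: step_cost_def if_distrib[of "\<lambda>x. x * _"] cong: if_cong)

lemma step_cost_Suc:
  assumes "dtmdp V G A T c" and "strategy V G A d"
  shows "step_cost V G T d f (Suc n) s =
    (if s \<in> V - G then \<Sum>u\<in>V. T s (d s) u * step_cost V G T d f n u else 0)"
  unfolding step_cost_def reach_Suc_first[OF assms]
  by (cases "s \<in> V - G")
    (auto simp add: sum_distrib_left sum_distrib_right sum.swap[of _ "V - G"] mult.assoc simp del: reach.simps)

lemma step_cost_nonneg:
  assumes "dtmdp V G A T c" and "strategy V G A d" and "\<forall>u\<in>V - G. 0 \<le> f u (d u)"
  shows "0 \<le> step_cost V G T d f n s"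
  unfolding step_cost_def using assms(3) by (intro sum_nonneg mult_nonneg_nonneg reach_nonneg[OF assms(1,2)]) auto

lemma ennreal_step_cost_Suc:
  assumes D: "dtmdp V G A T c" and S: "strategy V G A d" and f: "\<forall>u\<in>V - G. 0 \<le> f u (d u)"
  shows "ennreal (step_cost V G T d f (Suc n) s) =
    (if s \<in> V - G then \<Sum>u\<in>V. ennreal (T s (d s) u) * ennreal (step_cost V G T d f n u) else 0)"
  using step_cost_Suc[OF D S] sum_ennreal_mult[of V "T s (d s)" "step_cost V G T d f n"]
    strategy_T_nonneg[OF D S] step_cost_nonneg[where f=f, OF D S f] by simp

lemma expcost_eq_suminf_step_cost:
  assumes "dtmdp V G A T c" and "strategy V G A d" and "\<forall>u\<in>V - G. 0 \<le> f u (d u)"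
  shows "expcost V G T d f s = (\<Sum>n. ennreal (step_cost V G T d f n s))"
  unfolding expcost_def step_cost_def using assms(3) reach_nonneg[OF assms(1,2)]
  by (subst sum_ennreal) auto

lemma expcost_Bellman:
  assumes D: "dtmdp V G A T c" and S: "strategy V G A d" and f: "\<forall>u\<in>V - G. 0 \<le> f u (d u)"
  shows "expcost V G T d f s = (if s \<in> V - G
    then ennreal (f s (d s)) + (\<Sum>u\<in>V. ennreal (T s (d s) u) * expcost V G T d f u) else 0)"
proof -
  let ?X = "\<lambda>n u. ennreal (step_cost V G T d f n u)"
  have "expcost V G T d f s = (\<Sum>n. ?X n s)"
    by (rule expcost_eq_suminf_step_cost[where f=f, OF D S f])
  also have "\<dots> = (\<Sum>n. ?X (Suc n) s) + ?X 0 s"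
    using suminf_offset[of "\<lambda>n. ?X n s" 1] by simp
  also have "(\<Sum>n. ?X (Suc n) s) =
      (if s \<in> V - G then \<Sum>u\<in>V. ennreal (T s (d s) u) * expcost V G T d f u else 0)"
    by (auto simp add: ennreal_step_cost_Suc[where f=f, OF D S f]
        expcost_eq_suminf_step_cost[where f=f, OF D S f] suminf_sum[OF summableI])
  finally show ?thesis
    by (simp add: step_cost_0[OF dtmdp_finite[OF D]] add.commute)
qed

lemma expcost_outside:
  assumes "dtmdp V G A T c" and "strategy V G A d" and "\<forall>u\<in>V - G. 0 \<le> f u (d u)"
    and "s \<notin> V - G"
  shows "expcost V G T d f s = 0"
  using expcost_Bellman[where f=f, OF assms(1-3), of s] assms(4) by metis

lemma expcost_le_supersolution:
  assumes D: "dtmdp V G A T c" and S: "strategy V G A d" and f: "\<forall>u\<in>V - G. 0 \<le> f u (d u)"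
    and super: "\<forall>u\<in>V - G. ennreal (f u (d u)) + (\<Sum>w\<in>V. ennreal (T u (d u) w) * h w) \<le> h u"
  shows "expcost V G T d f s \<le> h s"
proof -
  let ?X = "\<lambda>n u. ennreal (step_cost V G T d f n u)"
  have partial_sums: "(\<Sum>k<n. ?X k u) \<le> h u" for n u
  proof (induction n arbitrary: u)
    case 0
    show ?case by simp
  next
    case (Suc n)
    show ?case
    proof (cases "u \<in> V - G")
      case True
      have "(\<Sum>k<Suc n. ?X k u) = ?X 0 u + (\<Sum>k<n. ?X (Suc k) u)"
        by (rule sum.lessThan_Suc_shift)
      also have "\<dots> = ennreal (f u (d u)) + (\<Sum>w\<in>V. ennreal (T u (d u) w) * (\<Sum>k<n. ?X k w))"
        using True by (simp add: step_cost_0[OF dtmdp_finite[OF D]]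
            ennreal_step_cost_Suc[where f=f, OF D S f] sum_distrib_left sum.swap[of _ "{..<n}"])
      also have "\<dots> \<le> ennreal (f u (d u)) + (\<Sum>w\<in>V. ennreal (T u (d u) w) * h w)"
        using Suc.IH by (intro add_left_mono sum_mono mult_left_mono) auto
      also have "\<dots> \<le> h u"
        using super True by blast
      finally show ?thesis .
    next
      case False
      then have "?X k u = 0" for k
        by (cases k) (auto simp: step_cost_0[OF dtmdp_finite[OF D]] ennreal_step_cost_Suc[where f=f, OF D S f])
      then show ?thesis by simp
    qed
  qed
  show ?thesis
    unfolding expcost_eq_suminf_step_cost[where f=f, OF D S f]
    by (rule suminf_le_const[OF summableI partial_sums])
qed

lemma expcost_le_real_supersolution:
  assumes D: "dtmdp V G A T c" and S: "strategy V G A d" and f: "\<forall>u\<in>V - G. 0 \<le> f u (d u)"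
    and h_nonneg: "\<And>w. w \<in> V \<Longrightarrow> 0 \<le> h w"
    and super: "\<And>u. u \<in> V - G \<Longrightarrow> f u (d u) + (\<Sum>w\<in>V. T u (d u) w * h w) \<le> h u"
  shows "expcost V G T d f s \<le> ennreal (h s)"
proof (rule expcost_le_supersolution[where f=f, OF D S f], intro ballI)
  fix u assume u: "u \<in> V - G"
  have "ennreal (f u (d u)) + (\<Sum>w\<in>V. ennreal (T u (d u) w) * ennreal (h w))
      = ennreal (f u (d u) + (\<Sum>w\<in>V. T u (d u) w * h w))"
    using u f h_nonneg strategy_T_nonneg[OF D S u] by (simp add: sum_ennreal_mult sum_nonneg)
  also have "\<dots> \<le> ennreal (h u)"
    using super u by (simp add: ennreal_leI)
  finally show "ennreal (f u (d u)) + (\<Sum>w\<in>V. ennreal (T u (d u) w) * ennreal (h w)) \<le> ennreal (h u)" .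
qed

lemma expcost_le_CB: "dtmdp V G A T c \<Longrightarrow> s \<in> V \<Longrightarrow> expcost V G T d f s \<le> CB V G T f d"
  unfolding CB_def dtmdp_def by (intro Max_ge) auto

lemma expcost_count_cost_ge_1:
  assumes "dtmdp V G A T c" and "strategy V G A d" and "s \<in> V - G"
  shows "1 \<le> expcost V G T d count_cost s"
  using expcost_Bellman[where f=count_cost, OF assms(1,2)] assms(3) by (simp add: count_cost_def)

lemma expcost_real_Bellman:
  assumes D: "dtmdp V G A T c" and S: "strategy V G A d" and f: "\<forall>u\<in>V - G. 0 \<le> f u (d u)"
    and x: "\<forall>u\<in>V. expcost V G T d f u = ennreal (x u)" and x_nonneg: "\<forall>u\<in>V. 0 \<le> x u"
    and s: "s \<in> V - G"
  shows "x s = f s (d s) + (\<Sum>u\<in>V. T s (d s) u * x u)"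
proof -
  have T: "\<forall>u. 0 \<le> T s (d s) u"
    using strategy_T_nonneg[OF D S s] by blast
  have "ennreal (x s) = ennreal (f s (d s)) + (\<Sum>u\<in>V. ennreal (T s (d s) u) * ennreal (x u))"
    using expcost_Bellman[where f=f, OF D S f, of s] s x by simp
  also have "\<dots> = ennreal (f s (d s) + (\<Sum>u\<in>V. T s (d s) u * x u))"
    using T x_nonneg f s by (simp add: sum_ennreal_mult sum_nonneg)
  finally have "ennreal (x s) = ennreal (f s (d s) + (\<Sum>u\<in>V. T s (d s) u * x u))" .
  then show ?thesis
    using T x_nonneg f s by (subst (asm) ennreal_inj) (auto intro!: add_nonneg_nonneg sum_nonneg)
qed

lemma expcost_le_of_zero_bounded:
  assumes D: "dtmdp V G A T c" and S: "strategy V G A d" and S': "strategy V G A d'"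
    and bounded: "alpha_bounded V T c 0 d' d"
  shows "expcost V G T d' c s \<le> expcost V G T d c s"
proof (rule expcost_le_supersolution[OF D S'])
  show "\<forall>u\<in>V - G. 0 \<le> c u (d' u)"
    using strategy_cost_nonneg[OF D S'] by blast
  have c: "\<forall>u\<in>V - G. 0 \<le> c u (d u)"
    using strategy_cost_nonneg[OF D S] by blast
  show "\<forall>u\<in>V - G. ennreal (c u (d' u)) + (\<Sum>w\<in>V. ennreal (T u (d' u) w) * expcost V G T d c w)
      \<le> expcost V G T d c u"
  proof
    fix u assume u: "u \<in> V - G"
    then have "c u (d' u) \<le> c u (d u)" and "\<forall>w\<in>V. T u (d' u) w = T u (d u) w"
      using bounded unfolding alpha_bounded_def by auto
    then show "ennreal (c u (d' u)) + (\<Sum>w\<in>V. ennreal (T u (d' u) w) * expcost V G T d c w)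
        \<le> expcost V G T d c u"
      using u expcost_Bellman[where f=c, OF D S c, of u] by (simp add: ennreal_leI)
  qed
qed

lemma expcost_real_of_CB:
  assumes "dtmdp V G A T c" and "CB V G T f d = ennreal B" and "0 \<le> B" and "s \<in> V"
  shows "expcost V G T d f s = ennreal (enn2real (expcost V G T d f s))"
    and "enn2real (expcost V G T d f s) \<le> B"
  using expcost_le_CB[OF assms(1,4), of d f] assms(2,3)
  by (simp_all add: enn2real_leI ennreal_enn2real_of_le)

lemma expcost_le_of_alpha_bounded:
  fixes \<alpha> K B :: real
  assumes D: "dtmdp V G A T c" and S: "strategy V G A d" and S': "strategy V G A d'"
    and bounded: "alpha_bounded V T c \<alpha> d' d" and "0 \<le> \<alpha>"
    and K: "CB V G T count_cost d = ennreal K" and B: "CB V G T c d = ennreal B"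
    and "0 \<le> K" and "0 \<le> B"
    and small: "\<alpha> * K * card V \<le> 1 / 2" and s: "s \<in> V"
  shows "expcost V G T d' c s \<le> expcost V G T d c s + ennreal (2 * \<alpha> * (1 + card V * B) * K)"
proof -
  define \<gamma> where "\<gamma> = 2 * \<alpha> * (1 + card V * B)"
  define e where "e u = enn2real (expcost V G T d c u)" for u
  define \<kappa> where "\<kappa> u = enn2real (expcost V G T d count_cost u)" for u
  have c: "\<forall>u\<in>V - G. 0 \<le> c u (d u)" and c': "\<forall>u\<in>V - G. 0 \<le> c u (d' u)"
    using strategy_cost_nonneg[OF D S] strategy_cost_nonneg[OF D S'] by blast+
  have count: "\<forall>u\<in>V - G. 0 \<le> count_cost u (d u)"
    by (simp add: count_cost_def)
  have e: "\<forall>u\<in>V. expcost V G T d c u = ennreal (e u)" and e_bounds: "\<forall>u\<in>V. 0 \<le> e u \<and> e u \<le> B"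
    using expcost_real_of_CB[OF D B \<open>0 \<le> B\<close>] unfolding e_def by auto
  have \<kappa>: "\<forall>u\<in>V. expcost V G T d count_cost u = ennreal (\<kappa> u)"
    and \<kappa>_bounds: "\<forall>u\<in>V. 0 \<le> \<kappa> u \<and> \<kappa> u \<le> K"
    using expcost_real_of_CB[OF D K \<open>0 \<le> K\<close>] unfolding \<kappa>_def by auto
  have "0 \<le> \<gamma>"
    unfolding \<gamma>_def using \<open>0 \<le> \<alpha>\<close> \<open>0 \<le> B\<close> by simp
  have "expcost V G T d' c s \<le> ennreal (e s + \<gamma> * \<kappa> s)"
  proof (rule expcost_le_real_supersolution[where f=c and h="\<lambda>w. e w + \<gamma> * \<kappa> w", OF D S' c'])
    show "0 \<le> e w + \<gamma> * \<kappa> w" if "w \<in> V" for w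
      using that e_bounds \<kappa>_bounds \<open>0 \<le> \<gamma>\<close> by simp
  next
    fix u assume u: "u \<in> V - G"
    have "c u (d' u) + (\<Sum>w\<in>V. T u (d' u) w * (e w + \<gamma> * \<kappa> w))
        \<le> (c u (d u) + (\<Sum>w\<in>V. T u (d u) w * e w)) + \<gamma> * (1 + (\<Sum>w\<in>V. T u (d u) w * \<kappa> w))"
      unfolding \<gamma>_def using bounded u e_bounds \<kappa>_bounds small \<open>0 \<le> \<alpha>\<close> \<open>0 \<le> B\<close>
      by (intro perturbed_supersolution_step) (auto simp: alpha_bounded_def)
    also have "\<dots> = e u + \<gamma> * \<kappa> u"
      using expcost_real_Bellman[where f=c, OF D S c e _ u]
        expcost_real_Bellman[where f=count_cost, OF D S count \<kappa> _ u] e_bounds \<kappa>_bounds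
      by (simp add: count_cost_def)
    finally show "c u (d' u) + (\<Sum>w\<in>V. T u (d' u) w * (e w + \<gamma> * \<kappa> w)) \<le> e u + \<gamma> * \<kappa> u" .
  qed
  also have "\<dots> \<le> expcost V G T d c s + ennreal (\<gamma> * K)"
    using e e_bounds \<kappa>_bounds s \<open>0 \<le> \<gamma>\<close> by (simp add: ennreal_leI mult_left_mono)
  finally show ?thesis unfolding \<gamma>_def .
qed

lemma CB_count_cost_small:
  fixes \<alpha> :: real
  assumes D: "dtmdp V G A T c" and S: "strategy V G A d" and s: "s \<in> V - G" and "0 < \<alpha>"
    and small: "ennreal \<alpha> \<le> 1 / (2 * CB V G T count_cost d * of_nat (card V))"
  obtains k where "CB V G T count_cost d = ennreal k" and "1 \<le> k" and "\<alpha> * k * card V \<le> 1 / 2"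
proof -
  have "0 < card V"
    using s dtmdp_finite[OF D] by (auto simp: card_gt_0_iff)
  have "1 \<le> CB V G T count_cost d"
    using expcost_count_cost_ge_1[OF D S s] expcost_le_CB[OF D, of s d count_cost] s by simp
  moreover have "CB V G T count_cost d \<noteq> top"
  proof
    assume "CB V G T count_cost d = top"
    then have "ennreal \<alpha> \<le> 0"
      using small \<open>0 < card V\<close> by (simp add: ennreal_mult_eq_top_iff)
    then show False
      using \<open>0 < \<alpha>\<close> by simp
  qed
  ultimately obtain k where K: "CB V G T count_cost d = ennreal k" and "1 \<le> k"
    by (cases "CB V G T count_cost d") (auto simp flip: ennreal_1)
  have "2 * ennreal k * of_nat (card V) = ennreal (2 * k * card V)"
    using \<open>1 \<le> k\<close> by (simp add: ennreal_of_nat_eq_real_of_nat ennreal_mult)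
  then have "ennreal \<alpha> \<le> ennreal (1 / (2 * k * card V))"
    using small \<open>1 \<le> k\<close> \<open>0 < card V\<close> unfolding K by (simp add: divide_ennreal[symmetric])
  then have "\<alpha> * k * card V \<le> 1 / 2"
    using \<open>1 \<le> k\<close> \<open>0 < card V\<close> by (simp add: field_simps)
  with K \<open>1 \<le> k\<close> show ?thesis
    by (rule that)
qed

lemma expcost_le_of_alpha_bounded_CB:
  fixes \<alpha> :: real
  assumes D: "dtmdp V G A T c" and S: "strategy V G A d" and S': "strategy V G A d'"
    and bounded: "alpha_bounded V T c \<alpha> d' d" and "0 < \<alpha>" and "s \<in> V" and "t \<in> V - G"
    and small: "ennreal \<alpha> \<le> 1 / (2 * CB V G T count_cost d * of_nat (card V))"
  shows "expcost V G T d' c s \<le> expcost V G T d c s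
    + 2 * ennreal \<alpha> * CB V G T count_cost d * (1 + CB V G T c d * of_nat (card V))"
proof -
  obtain k where K: "CB V G T count_cost d = ennreal k" and "1 \<le> k" and "\<alpha> * k * card V \<le> 1 / 2"
    using CB_count_cost_small[OF D S \<open>t \<in> V - G\<close> \<open>0 < \<alpha>\<close> small] .
  show ?thesis
  proof (cases "CB V G T c d")
    case (real b)
    have "expcost V G T d' c s \<le> expcost V G T d c s + ennreal (2 * \<alpha> * (1 + card V * b) * k)"
      using expcost_le_of_alpha_bounded[OF D S S' bounded _ K real(2) _ real(1)] assms \<open>1 \<le> k\<close>
        \<open>\<alpha> * k * card V \<le> 1 / 2\<close> by simp
    also have "ennreal (2 * \<alpha> * (1 + card V * b) * k)
        = 2 * ennreal \<alpha> * CB V G T count_cost d * (1 + CB V G T c d * of_nat (card V))"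
      using K real \<open>0 < \<alpha>\<close> \<open>1 \<le> k\<close>
      by (simp add: ennreal_of_nat_eq_real_of_nat ennreal_mult ennreal_mult' ennreal_mult'' algebra_simps)
    finally show ?thesis .
  next
    case top
    have "card V \<noteq> 0"
      using \<open>s \<in> V\<close> dtmdp_finite[OF D] by auto
    then have "2 * ennreal \<alpha> * CB V G T count_cost d * (1 + CB V G T c d * of_nat (card V)) = top"
      using top K \<open>1 \<le> k\<close> \<open>0 < \<alpha>\<close> by (simp add: ennreal_mult_eq_top_iff)
    then show ?thesis by simp
  qed
qed

theorem lemma2:
  fixes V G :: "'v set" and A :: "'v \<Rightarrow> 'a set" and T :: "'v \<Rightarrow> 'a \<Rightarrow> 'v \<Rightarrow> real"
    and c :: "'v \<Rightarrow> 'a \<Rightarrow> real" and s_in :: 'v and d d' :: "'v \<Rightarrow> 'a" and \<alpha> :: real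
  assumes "dtmdp V G A T c" and "s_in \<in> V"
    and "strategy V G A d" and "strategy V G A d'"
    and "0 \<le> \<alpha>" and "\<alpha> \<le> 1"
    and "alpha_bounded V T c \<alpha> d' d"
    and "ennreal \<alpha> \<le> 1 / (2 * CB V G T count_cost d * of_nat (card V))"
  shows "expcost V G T d' c s_in \<le> expcost V G T d c s_in
           + 2 * ennreal \<alpha> * CB V G T count_cost d * (1 + CB V G T c d * of_nat (card V))"
proof -
  note D = assms(1) and S = assms(3) and S' = assms(4) and bounded = assms(7)
  consider "V - G = {}" | "\<alpha> = 0" | t where "t \<in> V - G" and "0 < \<alpha>"
    using assms(5) by force
  then show ?thesis
  proof cases
    case 1
    then have "expcost V G T d' c s_in = 0"
      using expcost_outside[OF D S'] strategy_cost_nonneg[OF D S'] by blast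
    then show ?thesis by simp
  next
    case 2
    \<comment> \<open>The hypothesis on \<open>\<alpha>\<close> is then vacuous and \<open>CB(#, d)\<close> may be infinite,
      but the error term vanishes since \<open>0 * \<infinity> = 0\<close> in \<open>ennreal\<close>.\<close>
    then show ?thesis
      using expcost_le_of_zero_bounded[OF D S S'] bounded by (simp add: add_increasing2)
  next
    case 3
    then show ?thesis
      using expcost_le_of_alpha_bounded_CB[OF D S S' bounded _ assms(2) _ assms(8)] by blast
  qed
qed

end
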